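(* Let $f:Y\to X$ be a covering of finite connected graphs. Consider the exact sequences \[ 0\to\mathbb{Z}\xrightarrow{\iota_Y}\mathrm{Div}(Y)\xrightarrow{\mathcal{L}_Y}\mathrm{Div}(Y)\to\mathrm{Pic}(Y)\to0 \] and \[ 0\to\mathbb{Z}\xrightarrow{\iota_X}\mathrm{Div}(X)\xrightarrow{\mathcal{L}_X}\mathrm{Div}(X)\to\mathrm{Pic}(X)\to0. \] The vertical maps are multiplication by $[Y:X]$ on $\mathbb{Z}$, $f_{\mathsf r}$ on the first $\mathrm{Div}$, $f_*$ on the second $\mathrm{Div}$, and the map $\mathrm{Pic}(Y)\to\mathrm{Pic}(X)$ induced by $f_*$. These vertical maps make the resulting diagram commute. Explicitly, $f_{\mathsf r}\circ\iota_Y=[Y:X]\,\iota_X$ and $f_*\circ\mathcal{L}_Y=\mathcal{L}_X\circ f_{\mathsf r}$. Moreover, $f_*$ and the induced map $\mathrm{Pic}(Y)\to\mathrm{Pic}(X)$ are surjective.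
   Context: A finite graph $X$ consists of a finite vertex set $V_X$, a finite edge set $\mathbb{E}_X$, a fixed-point-free involution $e\mapsto\bar e$, and maps $s,t:\mathbb{E}_X\to V_X$ with $s(\bar e)=t(e)$ and $t(\bar e)=s(e)$. $\mathbb{E}_{X,v}=\{e\in\mathbb{E}_X: s(e)=v\}$. A morphism $f:Y\to X$ consists of maps $f_V$, $f_{\mathbb{E}}$ compatible with $s$, $t$ and the involution. It is a covering if for each $w\in V_Y$ there is a positive integer $m_w(f)$ such that $f_{\mathbb{E}}:\mathbb{E}_{Y,w}\to\mathbb{E}_{X,f_V(w)}$ is $m_w(f)$-to-one. The degree is $[Y:X]=\sum_{w\in f_V^{-1}(v)}m_w(f)$, which is independent of $v\in V_X$ when $X$ is connected. $\mathrm{Div}(X)=\bigoplus_{v\in V_X}\mathbb{Z}[v]$. The Laplacian $\mathcal{L}_X:\mathrm{Div}(X)\to\mathrm{Div}(X)$ is $\mathcal{L}_X([v])=\sum_{e\in\mathbb{E}_{X,v}}([v]-[t(e)])$, and $\mathrm{Pic}(X)=\mathrm{coker}\,\mathcal{L}_X$. The map $\iota_X:\mathbb{Z}\to\mathrm{Div}(X)$ sends $1$ to $\sum_{v\in V_X}[v]$, and for connected $X$ the displayed rows are exact. The homomorphisms $f_*,f_{\mathsf r}:\mathrm{Div}(Y)\to\mathrm{Div}(X)$ are defined by $f_*([w])=[f_V(w)]$ and $f_{\mathsf r}([w])=m_w(f)[f_V(w)]$. *)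

theory Defs
  imports Main
begin

record ('v, 'e) fgraph =
  verts :: "'v set"
  arcs  :: "'e set"
  rev   :: "'e \<Rightarrow> 'e"
  src   :: "'e \<Rightarrow> 'v"
  tgt   :: "'e \<Rightarrow> 'v"

definition finite_graph :: "('v, 'e) fgraph \<Rightarrow> bool" where
  "finite_graph X \<longleftrightarrow> finite (verts X) \<and> finite (arcs X) \<and>
     (\<forall>e \<in> arcs X. rev X e \<in> arcs X \<and> rev X e \<noteq> e \<and> rev X (rev X e) = e \<and>
        src X e \<in> verts X \<and> tgt X e \<in> verts X \<and>
        src X (rev X e) = tgt X e \<and> tgt X (rev X e) = src X e)"

definition connected_graph :: "('v, 'e) fgraph \<Rightarrow> bool" where
  "connected_graph X \<longleftrightarrow> verts X \<noteq> {} \<and>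
     (\<forall>u \<in> verts X. \<forall>v \<in> verts X.
        (u, v) \<in> {(src X e, tgt X e) | e. e \<in> arcs X}\<^sup>*)"

definition out_arcs :: "('v, 'e) fgraph \<Rightarrow> 'v \<Rightarrow> 'e set" where
  "out_arcs X v = {e \<in> arcs X. src X e = v}"

definition graph_morphism ::
  "('w, 'f) fgraph \<Rightarrow> ('v, 'e) fgraph \<Rightarrow> ('w \<Rightarrow> 'v) \<Rightarrow> ('f \<Rightarrow> 'e) \<Rightarrow> bool" where
  "graph_morphism Y X fV fE \<longleftrightarrow> fV ` verts Y \<subseteq> verts X \<and> fE ` arcs Y \<subseteq> arcs X \<and>
     (\<forall>e \<in> arcs Y. src X (fE e) = fV (src Y e) \<and> tgt X (fE e) = fV (tgt Y e) \<and>
        fE (rev Y e) = rev X (fE e))"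

definition covering ::
  "('w, 'f) fgraph \<Rightarrow> ('v, 'e) fgraph \<Rightarrow> ('w \<Rightarrow> 'v) \<Rightarrow> ('f \<Rightarrow> 'e) \<Rightarrow> ('w \<Rightarrow> nat) \<Rightarrow> bool" where
  "covering Y X fV fE m \<longleftrightarrow> graph_morphism Y X fV fE \<and>
     (\<forall>w \<in> verts Y. m w > 0 \<and>
        (\<forall>e \<in> out_arcs X (fV w). card {e' \<in> out_arcs Y w. fE e' = e} = m w))"

definition cover_degree ::
  "('w, 'f) fgraph \<Rightarrow> ('v, 'e) fgraph \<Rightarrow> ('w \<Rightarrow> 'v) \<Rightarrow> ('w \<Rightarrow> nat) \<Rightarrow> int" where
  "cover_degree Y X fV m =
     (let v = (SOME v. v \<in> verts X) in (\<Sum>w \<in> {w \<in> verts Y. fV w = v}. int (m w)))"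

definition Div :: "('v, 'e) fgraph \<Rightarrow> ('v \<Rightarrow> int) set" where
  "Div X = {D. \<forall>v. v \<notin> verts X \<longrightarrow> D v = 0}"

definition delta :: "'v \<Rightarrow> 'v \<Rightarrow> int" where
  "delta v u = (if u = v then 1 else 0)"

text \<open>Laplacian, the linear extension of [v] \<mapsto> sum over e in E_v of ([v] - [t e]).\<close>
definition laplacian :: "('v, 'e) fgraph \<Rightarrow> ('v \<Rightarrow> int) \<Rightarrow> ('v \<Rightarrow> int)" where
  "laplacian X D = (\<lambda>u. \<Sum>v \<in> verts X. D v * (\<Sum>e \<in> out_arcs X v. delta v u - delta (tgt X e) u))"

definition iota :: "('v, 'e) fgraph \<Rightarrow> int \<Rightarrow> ('v \<Rightarrow> int)" where
  "iota X n = (\<lambda>u. if u \<in> verts X then n else 0)"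

definition pushforward :: "('w, 'f) fgraph \<Rightarrow> ('w \<Rightarrow> 'v) \<Rightarrow> ('w \<Rightarrow> int) \<Rightarrow> ('v \<Rightarrow> int)" where
  "pushforward Y fV D = (\<lambda>v. \<Sum>w \<in> {w \<in> verts Y. fV w = v}. D w)"

text \<open>f_r : [w] \<mapsto> m_w [fV w], extended linearly.\<close>
definition ramified_push ::
  "('w, 'f) fgraph \<Rightarrow> ('w \<Rightarrow> 'v) \<Rightarrow> ('w \<Rightarrow> nat) \<Rightarrow> ('w \<Rightarrow> int) \<Rightarrow> ('v \<Rightarrow> int)" where
  "ramified_push Y fV m D = (\<lambda>v. \<Sum>w \<in> {w \<in> verts Y. fV w = v}. int (m w) * D w)"

end

theory Submission
  imports Defs
begin

text \<open>Counting the arcs of Y over an arc e of X by their sources, the covering condition gives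
  their number as the sum of m over the fibre of src e. The involutions match the arcs over e
  with those over its reverse, so this fibre sum is the same at src e and tgt e and hence, X being
  connected, constant: it is [Y:X]. This gives the first square and shows that every fibre is
  nonempty, whence f_* and the induced map on Pic are onto. For the second square, grouping the
  arcs out of w by their images gives f_*(L_Y[w]) = m_w L_X[f w].\<close>

abbreviation fibre :: "('w, 'f) fgraph \<Rightarrow> ('w \<Rightarrow> 'v) \<Rightarrow> 'v \<Rightarrow> 'w set" where
  "fibre Y fV v \<equiv> {w \<in> verts Y. fV w = v}"

lemma covering_card_arc_preimage:
  assumes fY: "finite_graph Y" and cov: "covering Y X fV fE m" and e: "e \<in> arcs X"
  shows "card {e' \<in> arcs Y. fE e' = e} = (\<Sum>w \<in> fibre Y fV (src X e). m w)"
proof -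
  let ?A = "{e' \<in> arcs Y. fE e' = e}"
  have "finite ?A" "finite (fibre Y fV (src X e))"
    using fY unfolding finite_graph_def by auto
  moreover have "src Y ` ?A \<subseteq> fibre Y fV (src X e)"
    using cov fY unfolding covering_def graph_morphism_def finite_graph_def by auto
  ultimately have "card ?A = (\<Sum>w \<in> fibre Y fV (src X e). card {e' \<in> ?A. src Y e' = w})"
    using sum.group[of ?A _ "src Y" "\<lambda>_. 1::nat"] by simp
  also have "\<dots> = (\<Sum>w \<in> fibre Y fV (src X e). m w)"
  proof (rule sum.cong[OF refl])
    fix w assume w: "w \<in> fibre Y fV (src X e)"
    have "{e' \<in> ?A. src Y e' = w} = {e' \<in> out_arcs Y w. fE e' = e}"
      unfolding out_arcs_def by auto
    moreover have "e \<in> out_arcs X (fV w)" using w e unfolding out_arcs_def by auto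
    ultimately show "card {e' \<in> ?A. src Y e' = w} = m w"
      using cov w unfolding covering_def by auto
  qed
  finally show ?thesis .
qed

lemma covering_fibre_sum_src_eq_tgt:
  assumes fY: "finite_graph Y" and fX: "finite_graph X" and cov: "covering Y X fV fE m"
    and e: "e \<in> arcs X"
  shows "(\<Sum>w \<in> fibre Y fV (src X e). m w) = (\<Sum>w \<in> fibre Y fV (tgt X e). m w)"
proof -
  have mor: "graph_morphism Y X fV fE" using cov unfolding covering_def by blast
  have rev_e: "rev X e \<in> arcs X" "src X (rev X e) = tgt X e" "rev X (rev X e) = e"
    using fX e unfolding finite_graph_def by auto
  have "bij_betw (rev Y) {e' \<in> arcs Y. fE e' = e} {e' \<in> arcs Y. fE e' = rev X e}"
    by (rule bij_betw_byWitness[where f' = "rev Y"])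
      (use fY mor rev_e in \<open>auto simp: finite_graph_def graph_morphism_def\<close>)
  then have "card {e' \<in> arcs Y. fE e' = e} = card {e' \<in> arcs Y. fE e' = rev X e}"
    by (rule bij_betw_same_card)
  then show ?thesis
    using covering_card_arc_preimage[OF fY cov] e rev_e by simp
qed

lemma covering_fibre_sum_const:
  assumes fY: "finite_graph Y" and fX: "finite_graph X" and cX: "connected_graph X"
    and cov: "covering Y X fV fE m" and u: "u \<in> verts X" and v: "v \<in> verts X"
  shows "(\<Sum>w \<in> fibre Y fV u. m w) = (\<Sum>w \<in> fibre Y fV v. m w)"
proof -
  have "(u, v) \<in> {(src X e, tgt X e) | e. e \<in> arcs X}\<^sup>*"
    using cX u v unfolding connected_graph_def by blast
  then show ?thesis
  proof (induction rule: rtrancl_induct)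
    case (step y z)
    then show ?case using covering_fibre_sum_src_eq_tgt[OF fY fX cov] by auto
  qed simp
qed

lemma cover_degree_eq_fibre_sum:
  assumes "finite_graph Y" "finite_graph X" "connected_graph X" "covering Y X fV fE m"
    and v: "v \<in> verts X"
  shows "cover_degree Y X fV m = int (\<Sum>w \<in> fibre Y fV v. m w)"
proof -
  have "(SOME v. v \<in> verts X) \<in> verts X" using v by (rule someI)
  then show ?thesis
    unfolding cover_degree_def Let_def using covering_fibre_sum_const[OF assms] by simp
qed

lemma covering_surj_verts:
  assumes fY: "finite_graph Y" and cY: "connected_graph Y"
    and "finite_graph X" "connected_graph X" and cov: "covering Y X fV fE m"
  shows "fV ` verts Y = verts X"
proof
  show "fV ` verts Y \<subseteq> verts X"
    using cov unfolding covering_def graph_morphism_def by blast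
  show "verts X \<subseteq> fV ` verts Y"
  proof
    fix v assume v: "v \<in> verts X"
    obtain w0 where w0: "w0 \<in> verts Y" using cY unfolding connected_graph_def by auto
    then have "fV w0 \<in> verts X" using cov unfolding covering_def graph_morphism_def by auto
    have "0 < m w0" using cov w0 unfolding covering_def by auto
    also have "m w0 \<le> (\<Sum>w \<in> fibre Y fV (fV w0). m w)"
      by (rule member_le_sum) (use w0 fY in \<open>auto simp: finite_graph_def\<close>)
    also have "\<dots> = (\<Sum>w \<in> fibre Y fV v. m w)"
      by (rule covering_fibre_sum_const) fact+
    finally have "fibre Y fV v \<noteq> {}" by (metis less_irrefl sum.empty)
    then show "v \<in> fV ` verts Y" by auto
  qed
qed

lemma covering_sum_out_arcs:
  fixes g :: "'e \<Rightarrow> 'a::comm_semiring_1"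
  assumes fY: "finite_graph Y" and fX: "finite_graph X" and cov: "covering Y X fV fE m"
    and w: "w \<in> verts Y"
  shows "(\<Sum>e' \<in> out_arcs Y w. g (fE e')) = of_nat (m w) * (\<Sum>e \<in> out_arcs X (fV w). g e)"
proof -
  have "finite (out_arcs Y w)" "finite (out_arcs X (fV w))"
    using fY fX unfolding finite_graph_def out_arcs_def by auto
  moreover have "fE ` out_arcs Y w \<subseteq> out_arcs X (fV w)"
    using cov unfolding covering_def graph_morphism_def out_arcs_def by auto
  ultimately have "(\<Sum>e' \<in> out_arcs Y w. g (fE e'))
      = (\<Sum>e \<in> out_arcs X (fV w). of_nat (card {e' \<in> out_arcs Y w. fE e' = e}) * g e)"
    using sum.group[of "out_arcs Y w" _ fE "\<lambda>e'. g (fE e')"] by simp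
  also have "\<dots> = (\<Sum>e \<in> out_arcs X (fV w). of_nat (m w) * g e)"
    using cov w unfolding covering_def by simp
  finally show ?thesis by (simp add: sum_distrib_left)
qed

lemma pushforward_delta:
  assumes "finite (verts Y)" and "z \<in> verts Y"
  shows "pushforward Y fV (delta z) = delta (fV z)"
  using assms by (auto simp: pushforward_def delta_def fun_eq_iff)

lemma pushforward_laplacian:
  assumes fY: "finite_graph Y" and fX: "finite_graph X" and cov: "covering Y X fV fE m"
  shows "pushforward Y fV (laplacian Y D) = laplacian X (ramified_push Y fV m D)"
proof
  fix v
  have mor: "graph_morphism Y X fV fE" using cov unfolding covering_def by blast
  have finY: "finite (verts Y)" using fY unfolding finite_graph_def by blast
  let ?LX = "\<lambda>x. \<Sum>e \<in> out_arcs X x. delta x v - delta (tgt X e) v"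
  have "pushforward Y fV (laplacian Y D) v = (\<Sum>w \<in> verts Y. D w *
      (\<Sum>e' \<in> out_arcs Y w. pushforward Y fV (delta w) v - pushforward Y fV (delta (tgt Y e')) v))"
    unfolding pushforward_def laplacian_def
    by (subst sum.swap)
      (simp only: sum_distrib_left[symmetric] sum_subtractf sum.swap[of _ "fibre Y fV v"])
  also have "\<dots> = (\<Sum>w \<in> verts Y. D w *
      (\<Sum>e' \<in> out_arcs Y w. delta (fV w) v - delta (tgt X (fE e')) v))"
    using fY mor finY
    by (intro sum.cong refl arg_cong2[where f = "(*)"])
      (auto simp: pushforward_delta out_arcs_def finite_graph_def graph_morphism_def)
  also have "\<dots> = (\<Sum>w \<in> verts Y. int (m w) * D w * ?LX (fV w))"
  proof (rule sum.cong[OF refl])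
    fix w assume "w \<in> verts Y"
    from covering_sum_out_arcs[OF fY fX cov this, of "\<lambda>e. delta (fV w) v - delta (tgt X e) v"]
    show "D w * (\<Sum>e' \<in> out_arcs Y w. delta (fV w) v - delta (tgt X (fE e')) v)
        = int (m w) * D w * ?LX (fV w)" by simp
  qed
  also have "\<dots> = (\<Sum>x \<in> verts X. \<Sum>w \<in> fibre Y fV x. int (m w) * D w * ?LX (fV w))"
    using fX mor unfolding finite_graph_def graph_morphism_def
    by (intro sum.group[symmetric] finY) auto
  also have "\<dots> = (\<Sum>x \<in> verts X. \<Sum>w \<in> fibre Y fV x. int (m w) * D w * ?LX x)"
    by (intro sum.cong) auto
  also have "\<dots> = laplacian X (ramified_push Y fV m D) v"
    unfolding laplacian_def ramified_push_def by (simp add: sum_distrib_right)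
  finally show "pushforward Y fV (laplacian Y D) v = laplacian X (ramified_push Y fV m D) v" .
qed

lemma ramified_push_iota:
  assumes "finite_graph Y" "finite_graph X" "connected_graph X" and cov: "covering Y X fV fE m"
  shows "ramified_push Y fV m (iota Y n) = iota X (cover_degree Y X fV m * n)"
proof
  fix v
  have "ramified_push Y fV m (iota Y n) v = int (\<Sum>w \<in> fibre Y fV v. m w) * n"
    unfolding ramified_push_def iota_def by (simp add: sum_distrib_right)
  also have "\<dots> = iota X (cover_degree Y X fV m * n) v"
  proof (cases "v \<in> verts X")
    case True
    then show ?thesis using cover_degree_eq_fibre_sum[OF assms True] by (simp add: iota_def)
  next
    case False
    then have empty: "fibre Y fV v = {}"
      using cov unfolding covering_def graph_morphism_def by auto
    show ?thesis using False unfolding iota_def empty by simp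
  qed
  finally show "ramified_push Y fV m (iota Y n) v = iota X (cover_degree Y X fV m * n) v" .
qed

lemma pushforward_image_Div:
  assumes finY: "finite (verts Y)" and onto: "fV ` verts Y = verts X"
  shows "pushforward Y fV ` Div Y = Div X"
proof
  show "pushforward Y fV ` Div Y \<subseteq> Div X"
    using onto unfolding Div_def pushforward_def by (auto intro!: sum.neutral)
  show "Div X \<subseteq> pushforward Y fV ` Div Y"
  proof
    fix D assume D: "D \<in> Div X"
    define s where "s = inv_into (verts Y) fV"
    define D' where "D' w = (if w \<in> verts Y \<and> w = s (fV w) then D (fV w) else 0)" for w
    have "pushforward Y fV D' v = D v" for v
    proof (cases "v \<in> verts X")
      case True
      then have "s v \<in> fibre Y fV v"
        using onto unfolding s_def by (auto intro: inv_into_into f_inv_into_f)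
      then have "pushforward Y fV D' v = (\<Sum>w \<in> fibre Y fV v. if w = s v then D v else 0)"
        unfolding pushforward_def D'_def by (intro sum.cong) auto
      also have "\<dots> = D v" using \<open>s v \<in> fibre Y fV v\<close> finY by simp
      finally show ?thesis .
    next
      case False
      then have empty: "fibre Y fV v = {}" using onto by auto
      show ?thesis using False D unfolding Div_def pushforward_def empty by simp
    qed
    then have "pushforward Y fV D' = D" by (simp add: fun_eq_iff)
    moreover have "D' \<in> Div Y" unfolding Div_def D'_def by auto
    ultimately show "D \<in> pushforward Y fV ` Div Y" by (metis image_eqI)
  qed
qed

theorem proposition3p1:
  fixes Y :: "('w, 'f) fgraph" and X :: "('v, 'e) fgraph"
    and fV :: "'w \<Rightarrow> 'v" and fE :: "'f \<Rightarrow> 'e" and m :: "'w \<Rightarrow> nat"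
  assumes "finite_graph Y" and "connected_graph Y"
    and "finite_graph X" and "connected_graph X"
    and "covering Y X fV fE m"
  shows "(\<forall>n::int. ramified_push Y fV m (iota Y n) = iota X (cover_degree Y X fV m * n))
       \<and> (\<forall>D \<in> Div Y. pushforward Y fV (laplacian Y D) = laplacian X (ramified_push Y fV m D))
       \<and> pushforward Y fV ` Div Y = Div X
       \<and> (\<forall>D \<in> Div X. \<exists>D' \<in> Div Y. pushforward Y fV D' - D \<in> laplacian X ` Div X)"
proof (intro conjI allI ballI)
  note fY = assms(1) and fX = assms(3) and cX = assms(4) and cov = assms(5)
  show "ramified_push Y fV m (iota Y n) = iota X (cover_degree Y X fV m * n)" for n
    using ramified_push_iota[OF fY fX cX cov] .
  show "pushforward Y fV (laplacian Y D) = laplacian X (ramified_push Y fV m D)" for D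
    using pushforward_laplacian[OF fY fX cov] .
  show surj: "pushforward Y fV ` Div Y = Div X"
    using pushforward_image_Div covering_surj_verts[OF assms] fY
    unfolding finite_graph_def by blast
  show "\<exists>D' \<in> Div Y. pushforward Y fV D' - D \<in> laplacian X ` Div X" if "D \<in> Div X" for D
  proof -
    obtain D' where D': "D' \<in> Div Y" "pushforward Y fV D' = D"
      using \<open>D \<in> Div X\<close> surj by (metis imageE)
    have "pushforward Y fV D' - D = laplacian X (\<lambda>_. 0)"
      using D'(2) unfolding laplacian_def by (simp add: fun_eq_iff)
    moreover have "(\<lambda>_. 0) \<in> Div X" unfolding Div_def by simp
    ultimately show ?thesis using D'(1) by (metis image_eqI)
  qed
qed

end
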